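(* Let $u\le v$ in $S_n$ and let $I\subset[u,v]$ be a nonempty order ideal that is diamond-closed in $[u,v]$. Let $A_I$ be the set of atoms of $[u,v]$ (elements covering $u$) that lie in $I$. Then $I=\mathrm{dc}_{[u,v]}(\{u\}\cup A_I)$.
   Context: $S_n$ is the symmetric group with length $\ell$ (w.r.t. simple reflections $s_i=(i\ i{+}1)$), $T$ its transpositions. The Bruhat graph $\Gamma$ has vertex set $S_n$ and edges $w\to tw$ whenever $t\in T$, $\ell(w)<\ell(tw)$; Bruhat order is reachability in $\Gamma$. A diamond is a subgraph of $\Gamma$ with four distinct vertices $x_1,\dots,x_4$ and edges $x_1\to x_2\to x_4$, $x_1\to x_3\to x_4$. For $X\subset Y\subset S_n$, $X$ is diamond-closed in $Y$ if whenever $X$ contains three vertices of a diamond contained in $Y$ it contains the fourth. The diamond closure $\mathrm{dc}_Y(X)$ is the intersection of all sets $D$ with $X\subset D\subset Y$ that are diamond-closed in $Y$. *)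

theory Defs
  imports "HOL-Combinatorics.Permutations"
begin

definition Sn :: "nat \<Rightarrow> (nat \<Rightarrow> nat) set" where
  "Sn n = {w. w permutes {0..<n}}"

text \<open>Coxeter length w.r.t. adjacent transpositions = number of inversions.\<close>
definition len :: "nat \<Rightarrow> (nat \<Rightarrow> nat) \<Rightarrow> nat" where
  "len n w = card {(i, j). i < j \<and> j < n \<and> w j < w i}"

definition transp_set :: "nat \<Rightarrow> (nat \<Rightarrow> nat) set" where
  "transp_set n = {Transposition.transpose a b | a b. a < n \<and> b < n \<and> a \<noteq> b}"

definition bedge :: "nat \<Rightarrow> (nat \<Rightarrow> nat) \<Rightarrow> (nat \<Rightarrow> nat) \<Rightarrow> bool" where
  "bedge n w w' \<longleftrightarrow> w \<in> Sn n \<and> (\<exists>t \<in> transp_set n. w' = t \<circ> w) \<and> len n w < len n w'"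

definition bruhat_le :: "nat \<Rightarrow> (nat \<Rightarrow> nat) \<Rightarrow> (nat \<Rightarrow> nat) \<Rightarrow> bool" where
  "bruhat_le n u v \<longleftrightarrow> u \<in> Sn n \<and> (bedge n)\<^sup>*\<^sup>* u v"

definition bruhat_interval :: "nat \<Rightarrow> (nat \<Rightarrow> nat) \<Rightarrow> (nat \<Rightarrow> nat) \<Rightarrow> (nat \<Rightarrow> nat) set" where
  "bruhat_interval n u v = {w. bruhat_le n u w \<and> bruhat_le n w v}"

definition order_ideal_in :: "nat \<Rightarrow> (nat \<Rightarrow> nat) set \<Rightarrow> (nat \<Rightarrow> nat) set \<Rightarrow> bool" where
  "order_ideal_in n I Y \<longleftrightarrow> I \<subseteq> Y \<and> (\<forall>x\<in>I. \<forall>y\<in>Y. bruhat_le n y x \<longrightarrow> y \<in> I)"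

definition atoms :: "nat \<Rightarrow> (nat \<Rightarrow> nat) \<Rightarrow> (nat \<Rightarrow> nat) \<Rightarrow> (nat \<Rightarrow> nat) set" where
  "atoms n u v = {a \<in> bruhat_interval n u v. a \<noteq> u \<and>
      \<not> (\<exists>z. bruhat_le n u z \<and> bruhat_le n z a \<and> z \<noteq> u \<and> z \<noteq> a)}"

definition diamond :: "nat \<Rightarrow> (nat \<Rightarrow> nat) \<Rightarrow> (nat \<Rightarrow> nat) \<Rightarrow> (nat \<Rightarrow> nat) \<Rightarrow> (nat \<Rightarrow> nat) \<Rightarrow> bool" where
  "diamond n x1 x2 x3 x4 \<longleftrightarrow> distinct [x1, x2, x3, x4] \<and>
     bedge n x1 x2 \<and> bedge n x2 x4 \<and> bedge n x1 x3 \<and> bedge n x3 x4"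

definition diamond_closed :: "nat \<Rightarrow> (nat \<Rightarrow> nat) set \<Rightarrow> (nat \<Rightarrow> nat) set \<Rightarrow> bool" where
  "diamond_closed n X Y \<longleftrightarrow> (\<forall>x1 x2 x3 x4.
     diamond n x1 x2 x3 x4 \<and> {x1, x2, x3, x4} \<subseteq> Y \<and>
     card ({x1, x2, x3, x4} \<inter> X) \<ge> 3 \<longrightarrow> {x1, x2, x3, x4} \<subseteq> X)"

definition diamond_closure :: "nat \<Rightarrow> (nat \<Rightarrow> nat) set \<Rightarrow> (nat \<Rightarrow> nat) set \<Rightarrow> (nat \<Rightarrow> nat) set" where
  "diamond_closure n Y X = \<Inter> {D. X \<subseteq> D \<and> D \<subseteq> Y \<and> diamond_closed n D Y}"

end

(* Every path x -> y -> w of length two in the Bruhat graph of S_n lies in a diamond.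
   Writing y = x (p q) and w = y (r s) as right multiplications by transpositions of
   positions, either the two transpositions are disjoint and commute, or they share one
   position, and then comparing the relative order of three positions with that of their
   values shows that x (j k) or x (i k) is a second middle vertex.  Consequently every
   element w of I other than u and the atoms is the top of a diamond whose three other
   vertices lie in [u, w], hence in I, and are shorter than w; by induction on length,
   every diamond-closed set containing u and the atoms in I contains I.  Conversely I is
   itself such a set. *)

theory Submission
  imports Defs
begin

subsection \<open>Length change under a transposition of positions\<close>

definition inversions :: "nat \<Rightarrow> (nat \<Rightarrow> nat) \<Rightarrow> (nat \<times> nat) set" where
  "inversions n x = {(i, j). i < j \<and> j < n \<and> x j < x i}"

lemma len_eq_card_inversions: "len n x = card (inversions n x)"
  by (simp add: len_def inversions_def)

lemma finite_inversions: "finite (inversions n x)"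
  by (rule finite_subset[of _ "{..<n} \<times> {..<n}"]) (auto simp: inversions_def)

lemma len_less_swap_ascent:
  assumes x: "x permutes {0..<n}" and pq: "p < q" "q < n" and asc: "x p < x q"
  shows "len n x < len n (x \<circ> transpose p q)"
proof -
  define s where "s = transpose p q"
  define y where "y = x \<circ> s"
  \<comment> \<open>Move an inversion of x along s if s keeps its two positions in order, else keep it:
      this injects the inversions of x into those of y and misses (p, q).\<close>
  define f where "f = (\<lambda>(k, l). if s k < s l then (s k, s l) else (k, l))"
  have inj: "inj x" using permutes_inj[OF x] .
  have ss: "s (s k) = k" for k by (simp add: s_def)
  have f_involutive: "f (f kl) = kl" if "kl \<in> inversions n x" for kl
    using that by (auto simp: inversions_def f_def ss)
  have s_less_n: "s k < n \<longleftrightarrow> k < n" for k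
    using pq by (auto simp: s_def transpose_def)
  have f_maps: "f kl \<in> inversions n y" if kl_inv: "kl \<in> inversions n x" for kl
  proof -
    obtain k l where kl: "kl = (k, l)" "k < l" "l < n" "x l < x k"
      using kl_inv unfolding inversions_def by blast
    show ?thesis
    proof (cases "s k < s l")
      case True
      then show ?thesis using kl s_less_n ss by (auto simp: f_def inversions_def y_def)
    next
      case False
      have "x k = x p \<longleftrightarrow> k = p" "x l = x p \<longleftrightarrow> l = p" "x k = x q \<longleftrightarrow> k = q" "x l = x q \<longleftrightarrow> l = q"
        using inj by (auto dest: injD)
      then have "y l < y k"
        using False kl pq asc by (auto simp: y_def s_def transpose_def split: if_splits)
      then show ?thesis using False kl by (auto simp: f_def inversions_def)
    qed
  qed
  have "inj_on f (inversions n x)"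
    using f_involutive by (rule inj_on_inverseI)
  then have "card (inversions n x) = card (f ` inversions n x)"
    by (simp add: card_image)
  also have "\<dots> < card (inversions n y)"
  proof (rule psubset_card_mono[OF finite_inversions])
    have "(p, q) \<in> inversions n y"
      using pq asc by (simp add: inversions_def y_def s_def)
    moreover have "(p, q) \<notin> f ` inversions n x"
    proof
      assume "(p, q) \<in> f ` inversions n x"
      then obtain k l where kl: "(k, l) \<in> inversions n x" "f (k, l) = (p, q)" by auto
      then have "(k, l) = f (p, q)"
        using f_involutive by metis
      also have "f (p, q) = (p, q)" using pq by (simp add: f_def s_def)
      finally show False using kl(1) asc by (simp add: inversions_def)
    qed
    ultimately show "f ` inversions n x \<subset> inversions n y" using f_maps by blast
  qed
  finally show ?thesis by (simp add: len_eq_card_inversions y_def s_def)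
qed

lemma len_less_swap_iff:
  assumes x: "x permutes {0..<n}" and pq: "p < n" "q < n" "p \<noteq> q"
  shows "len n x < len n (x \<circ> transpose p q) \<longleftrightarrow> (p < q \<longleftrightarrow> x p < x q)"
proof -
  have ordered: "len n x < len n (x \<circ> transpose p q) \<longleftrightarrow> x p < x q" if "p < q" "q < n" for p q
  proof
    show "x p < x q \<Longrightarrow> len n x < len n (x \<circ> transpose p q)"
      using len_less_swap_ascent[OF x that] .
  next
    assume up: "len n x < len n (x \<circ> transpose p q)"
    show "x p < x q"
    proof (rule ccontr)
      assume "\<not> x p < x q"
      moreover have "x p \<noteq> x q" using permutes_inj[OF x] that by (auto dest: injD)
      ultimately have "(x \<circ> transpose p q) p < (x \<circ> transpose p q) q" by simp
      moreover have "x \<circ> transpose p q permutes {0..<n}"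
        using that by (intro permutes_compose[OF permutes_swap_id x]) auto
      ultimately have "len n (x \<circ> transpose p q) < len n (x \<circ> transpose p q \<circ> transpose p q)"
        using len_less_swap_ascent that by blast
      then have "len n (x \<circ> transpose p q) < len n x" by (simp add: comp_assoc)
      then show False using up by simp
    qed
  qed
  have "x p \<noteq> x q" using permutes_inj[OF x] pq by (auto dest: injD)
  then show ?thesis
    using pq ordered[of p q] ordered[of q p] by (cases "p < q") (auto simp: transpose_commute)
qed

subsection \<open>Edges of the Bruhat graph\<close>

lemma comp_transpose_in_Sn: "x \<in> Sn n \<Longrightarrow> p < n \<Longrightarrow> q < n \<Longrightarrow> x \<circ> transpose p q \<in> Sn n"
  unfolding Sn_def by (auto intro: permutes_compose[OF permutes_swap_id])

lemma left_transposition_iff_right: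
  assumes "x \<in> Sn n"
  shows "(\<exists>t \<in> transp_set n. y = t \<circ> x) \<longleftrightarrow> (\<exists>p q. p < n \<and> q < n \<and> p \<noteq> q \<and> y = x \<circ> transpose p q)"
proof -
  have x: "x permutes {0..<n}" using assms by (simp add: Sn_def)
  have below_n: "x k < n \<longleftrightarrow> k < n" "inv x k < n \<longleftrightarrow> k < n" for k
    using permutes_in_image[OF x] permutes_in_image[OF permutes_inv[OF x]] by auto
  have inj: "inj x" "inj (inv x)"
    using permutes_inj[OF x] permutes_inj[OF permutes_inv[OF x]] .
  have left: "transpose a b \<circ> x = x \<circ> transpose (inv x a) (inv x b)" for a b
    by (rule transpose_comp_eq[OF permutes_bij[OF x]])
  have right: "x \<circ> transpose p q = transpose (x p) (x q) \<circ> x" for p q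
    using transpose_comp_eq[OF permutes_bij[OF x]] permutes_inverses(2)[OF x] by metis
  show ?thesis
  proof
    assume "\<exists>t \<in> transp_set n. y = t \<circ> x"
    then obtain a b where "a < n" "b < n" "a \<noteq> b" "y = transpose a b \<circ> x"
      unfolding transp_set_def by blast
    then show "\<exists>p q. p < n \<and> q < n \<and> p \<noteq> q \<and> y = x \<circ> transpose p q"
      using left below_n inj(2) by (metis injD)
  next
    assume "\<exists>p q. p < n \<and> q < n \<and> p \<noteq> q \<and> y = x \<circ> transpose p q"
    then obtain p q where "p < n" "q < n" "p \<noteq> q" "y = x \<circ> transpose p q" by blast
    then show "\<exists>t \<in> transp_set n. y = t \<circ> x"
      unfolding transp_set_def using right below_n inj(1) by (metis (mono_tags, lifting) injD mem_Collect_eq)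
  qed
qed

lemma bedge_comp_transpose_iff:
  assumes x: "x \<in> Sn n" and pq: "p < n" "q < n" "p \<noteq> q"
  shows "bedge n x (x \<circ> transpose p q) \<longleftrightarrow> (p < q \<longleftrightarrow> x p < x q)"
  using len_less_swap_iff[of x n p q] left_transposition_iff_right[OF x] assms
  by (auto simp: bedge_def Sn_def)

lemma bedge_iff:
  "bedge n x y \<longleftrightarrow> x \<in> Sn n \<and>
     (\<exists>p q. p < n \<and> q < n \<and> p \<noteq> q \<and> y = x \<circ> transpose p q \<and> (p < q \<longleftrightarrow> x p < x q))"
  (is "_ \<longleftrightarrow> ?swap")
proof
  assume xy: "bedge n x y"
  then obtain p q where "x \<in> Sn n" "p < n" "q < n" "p \<noteq> q" "y = x \<circ> transpose p q"
    using left_transposition_iff_right unfolding bedge_def by blast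
  then show ?swap
    using xy bedge_comp_transpose_iff by blast
qed (use bedge_comp_transpose_iff in blast)

lemma bedge_len_less: "bedge n x y \<Longrightarrow> len n x < len n y"
  by (simp add: bedge_def)

lemma bedge_in_Sn: "bedge n x y \<Longrightarrow> x \<in> Sn n \<and> y \<in> Sn n"
  by (auto simp: bedge_iff intro: comp_transpose_in_Sn)

subsection \<open>Diamonds in the Bruhat graph\<close>

lemma diamondI:
  assumes "bedge n x y" "bedge n y w" "bedge n x y'" "bedge n y' w" "y \<noteq> y'"
  shows "diamond n x y y' w"
  using assms bedge_len_less[OF assms(1)] bedge_len_less[OF assms(2)]
    bedge_len_less[OF assms(3)] bedge_len_less[OF assms(4)]
  by (auto simp: diamond_def)

text \<open>With a, b, c the values of x at the positions i, j, k, the hypotheses say that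
  x \<rightarrow> x \<circ> (i j) \<rightarrow> x \<circ> (i j) \<circ> (j k) is a path in the Bruhat graph, and the two
  disjuncts say the same with x \<circ> (j k), resp. x \<circ> (i k), as middle vertex.\<close>
lemma swap_ascents_alternative:
  fixes i j k :: "'a::linorder" and a b c :: "'b::linorder"
  assumes "distinct [i, j, k]" "distinct [a, b, c]"
    and "i < j \<longleftrightarrow> a < b" "j < k \<longleftrightarrow> a < c"
  shows "(j < k \<longleftrightarrow> b < c) \<and> (i < k \<longleftrightarrow> a < b) \<or> (i < k \<longleftrightarrow> a < c) \<and> (i < j \<longleftrightarrow> c < b)"
  using assms
  by (cases i j rule: linorder_cases; cases j k rule: linorder_cases; cases i k rule: linorder_cases)
    (auto dest: order.strict_trans)

lemma diamond_of_overlapping_transpositions: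
  assumes x: "x \<in> Sn n" and ijk: "i < n" "j < n" "k < n" "distinct [i, j, k]"
    and e1: "bedge n x (x \<circ> transpose i j)"
    and e2: "bedge n (x \<circ> transpose i j) (x \<circ> transpose i j \<circ> transpose j k)"
  shows "\<exists>y'. diamond n x (x \<circ> transpose i j) y' (x \<circ> transpose i j \<circ> transpose j k)"
proof -
  define y where "y = x \<circ> transpose i j"
  define w where "w = y \<circ> transpose j k"
  define yA where "yA = x \<circ> transpose j k"
  define yB where "yB = x \<circ> transpose i k"
  have "inj x" using x by (simp add: Sn_def permutes_inj)
  then have distinct_values: "distinct [x i, x j, x k]"
    using ijk(4) by (auto dest: injD)
  have S: "y \<in> Sn n" "yA \<in> Sn n" "yB \<in> Sn n"
    using x ijk by (simp_all add: y_def yA_def yB_def comp_transpose_in_Sn)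
  have wA: "w = yA \<circ> transpose i k" and wB: "w = yB \<circ> transpose i j"
    using ijk(4) by (auto simp: fun_eq_iff w_def y_def yA_def yB_def transpose_def)
  have "i < j \<longleftrightarrow> x i < x j"
    using e1 bedge_comp_transpose_iff[OF x ijk(1,2)] ijk(4) by (simp add: y_def)
  moreover have "j < k \<longleftrightarrow> x i < x k"
    using e2 bedge_comp_transpose_iff[OF S(1) ijk(2,3)] ijk(4) by (simp add: y_def)
  ultimately have "(j < k \<longleftrightarrow> x j < x k) \<and> (i < k \<longleftrightarrow> x i < x j) \<or>
      (i < k \<longleftrightarrow> x i < x k) \<and> (i < j \<longleftrightarrow> x k < x j)"
    using swap_ascents_alternative ijk(4) distinct_values by blast
  moreover have "bedge n x yA \<and> bedge n yA w \<longleftrightarrow> (j < k \<longleftrightarrow> x j < x k) \<and> (i < k \<longleftrightarrow> x i < x j)"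
    using bedge_comp_transpose_iff[OF x ijk(2,3)] bedge_comp_transpose_iff[OF S(2) ijk(1,3)] ijk(4)
    by (simp add: wA yA_def)
  moreover have "bedge n x yB \<and> bedge n yB w \<longleftrightarrow> (i < k \<longleftrightarrow> x i < x k) \<and> (i < j \<longleftrightarrow> x k < x j)"
    using bedge_comp_transpose_iff[OF x ijk(1,3)] bedge_comp_transpose_iff[OF S(3) ijk(1,2)] ijk(4)
    by (simp add: wB yB_def)
  moreover have "yA k \<noteq> y k" "yB k \<noteq> y k"
    using distinct_values ijk(4) by (simp_all add: y_def yA_def yB_def)
  ultimately show ?thesis
    using diamondI[of n x y w] e1 e2 unfolding w_def y_def by metis
qed

lemma diamond_of_disjoint_transpositions:
  assumes x: "x \<in> Sn n" and pqrs: "p < n" "q < n" "r < n" "s < n" "distinct [p, q, r, s]"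
    and e1: "bedge n x (x \<circ> transpose p q)"
    and e2: "bedge n (x \<circ> transpose p q) (x \<circ> transpose p q \<circ> transpose r s)"
  shows "\<exists>y'. diamond n x (x \<circ> transpose p q) y' (x \<circ> transpose p q \<circ> transpose r s)"
proof -
  define y where "y = x \<circ> transpose p q"
  define w where "w = y \<circ> transpose r s"
  define y' where "y' = x \<circ> transpose r s"
  have w': "w = y' \<circ> transpose p q"
    using pqrs(5) by (simp add: w_def y_def y'_def comp_assoc swap_id_independent)
  have S: "y \<in> Sn n" "y' \<in> Sn n"
    using x pqrs by (simp_all add: y_def y'_def comp_transpose_in_Sn)
  have "y r = x r" "y s = x s" "y' p = x p" "y' q = x q"
    using pqrs(5) by (auto simp: y_def y'_def)
  then have "bedge n x y'" "bedge n y' w"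
    using e1 e2 pqrs(5) bedge_comp_transpose_iff[OF x pqrs(1,2)] bedge_comp_transpose_iff[OF S(1) pqrs(3,4)]
      bedge_comp_transpose_iff[OF x pqrs(3,4)] bedge_comp_transpose_iff[OF S(2) pqrs(1,2)]
    unfolding y'_def[symmetric] w'[symmetric] by (simp_all add: y_def[symmetric] w_def[symmetric])
  moreover have "inj x" using x by (simp add: Sn_def permutes_inj)
  then have "y' r \<noteq> y r"
    using pqrs(5) by (auto simp: y_def y'_def dest: injD)
  ultimately show ?thesis
    using diamondI e1 e2 unfolding w_def y_def by metis
qed

lemma transpositions_cases:
  assumes "p \<noteq> q" "r \<noteq> s"
  obtains (same) "{r, s} = {p, q}"
    | (disjoint) "distinct [p, q, r, s]"
    | (overlap) i j k where "distinct [i, j, k]" "{i, j, k} \<subseteq> {p, q, r, s}"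
        "transpose p q = transpose i j" "transpose r s = transpose j k"
proof (cases "{r, s} = {p, q} \<or> {r, s} \<inter> {p, q} = {}")
  case True
  then show thesis using that(1,2) assms by auto
next
  case False
  then consider "r = p" "s \<noteq> q" | "r = q" "s \<noteq> p" | "s = p" "r \<noteq> q" | "s = q" "r \<noteq> p"
    by blast
  then show thesis
  proof cases
    case 1
    show thesis by (rule that(3)[of q p s]) (use 1 assms in \<open>auto simp: transpose_commute\<close>)
  next
    case 2
    show thesis by (rule that(3)[of p q s]) (use 2 assms in auto)
  next
    case 3
    show thesis by (rule that(3)[of q p r]) (use 3 assms in \<open>auto simp: transpose_commute\<close>)
  next
    case 4
    show thesis by (rule that(3)[of p q r]) (use 4 assms in \<open>auto simp: transpose_commute\<close>)
  qed
qed

lemma bedge_two_steps_diamond: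
  assumes xy: "bedge n x y" and yw: "bedge n y w"
  obtains y' where "diamond n x y y' w"
proof -
  obtain p q where x: "x \<in> Sn n" and pq: "p < n" "q < n" "p \<noteq> q" and y: "y = x \<circ> transpose p q"
    using xy by (auto simp: bedge_iff)
  obtain r s where rs: "r < n" "s < n" "r \<noteq> s" and w: "w = x \<circ> transpose p q \<circ> transpose r s"
    using yw by (auto simp: bedge_iff y)
  from pq(3) rs(3) show ?thesis
  proof (cases rule: transpositions_cases)
    case same
    then have "w = x"
      by (auto simp: w doubleton_eq_iff transpose_commute comp_assoc)
    then show ?thesis
      using bedge_len_less[OF xy] bedge_len_less[OF yw] by simp
  next
    case disjoint
    then show ?thesis
      using that diamond_of_disjoint_transpositions[OF x pq(1,2) rs(1,2)] xy yw by (auto simp: y w)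
  next
    case (overlap i j k)
    have "i < n" "j < n" "k < n"
      using overlap(2) pq rs by auto
    moreover have "bedge n x (x \<circ> transpose i j)"
      "bedge n (x \<circ> transpose i j) (x \<circ> transpose i j \<circ> transpose j k)"
      using xy yw unfolding y w overlap(3,4) .
    ultimately show ?thesis
      using that diamond_of_overlapping_transpositions[OF x _ _ _ overlap(1)]
      unfolding y w overlap(3,4) by blast
  qed
qed

subsection \<open>Order ideals and diamond closure\<close>

lemma rtranclp_last_two_steps:
  assumes "r\<^sup>*\<^sup>* a b" "r\<^sup>*\<^sup>* b c" "b \<noteq> a" "b \<noteq> c"
  obtains x y where "r\<^sup>*\<^sup>* a x" "r x y" "r y c"
proof -
  obtain x' where ax': "r\<^sup>*\<^sup>* a x'" and x'b: "r x' b"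
    using assms(1,3) by (metis rtranclp.cases)
  obtain y where b_y: "r\<^sup>*\<^sup>* b y" and yc: "r y c"
    using assms(2,4) by (metis rtranclp.cases)
  show ?thesis
  proof (cases "b = y")
    case True
    then show ?thesis using that ax' x'b yc by blast
  next
    case False
    then obtain x where "r\<^sup>*\<^sup>* b x" "r x y"
      using b_y by (metis rtranclp.cases)
    then show ?thesis
      using that ax' x'b yc by (meson rtranclp.rtrancl_into_rtrancl rtranclp_trans)
  qed
qed

lemma bruhat_le_trans: "bruhat_le n x y \<Longrightarrow> bruhat_le n y z \<Longrightarrow> bruhat_le n x z"
  by (auto simp: bruhat_le_def)

lemma bedge_imp_bruhat_le: "bedge n x y \<Longrightarrow> bruhat_le n x y"
  by (simp add: bruhat_le_def bedge_in_Sn)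

lemma non_atom_top_of_diamond:
  assumes w: "w \<in> bruhat_interval n u v" and "w \<noteq> u" "w \<notin> atoms n u v"
  obtains x y y' where "diamond n x y y' w"
    and "bruhat_le n u x" "bruhat_le n u y" "bruhat_le n u y'"
proof -
  obtain z where "bruhat_le n u z" "bruhat_le n z w" "z \<noteq> u" "z \<noteq> w"
    using assms by (auto simp: atoms_def)
  then obtain x y where ux: "bruhat_le n u x" and xy: "bedge n x y" and yw: "bedge n y w"
    by (auto simp: bruhat_le_def elim: rtranclp_last_two_steps)
  obtain y' where dia: "diamond n x y y' w"
    using bedge_two_steps_diamond[OF xy yw] .
  then have "bedge n x y'" by (simp add: diamond_def)
  then show ?thesis
    using that dia ux xy bruhat_le_trans bedge_imp_bruhat_le by blast
qed

lemma diamond_len_less_top: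
  "diamond n x1 x2 x3 x4 \<Longrightarrow> len n x1 < len n x4 \<and> len n x2 < len n x4 \<and> len n x3 < len n x4"
  unfolding diamond_def by (meson bedge_len_less less_trans)

lemma diamond_bruhat_le_top:
  "diamond n x1 x2 x3 x4 \<Longrightarrow> bruhat_le n x1 x4 \<and> bruhat_le n x2 x4 \<and> bruhat_le n x3 x4"
  unfolding diamond_def by (meson bedge_imp_bruhat_le bruhat_le_trans)

lemma diamond_closedD:
  assumes "diamond_closed n D Y" "diamond n x1 x2 x3 x4"
    and "{x1, x2, x3, x4} \<subseteq> Y" "{x1, x2, x3} \<subseteq> D"
  shows "x4 \<in> D"
proof -
  have "3 = card {x1, x2, x3}"
    using assms(2) by (simp add: diamond_def)
  also have "\<dots> \<le> card ({x1, x2, x3, x4} \<inter> D)"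
    using assms(4) by (intro card_mono) auto
  finally show ?thesis
    using assms(1-3) unfolding diamond_closed_def by blast
qed

lemma diamond_closure_least:
  "X \<subseteq> D \<Longrightarrow> D \<subseteq> Y \<Longrightarrow> diamond_closed n D Y \<Longrightarrow> diamond_closure n Y X \<subseteq> D"
  unfolding diamond_closure_def by blast

lemma subset_diamond_closureI:
  "(\<And>D. X \<subseteq> D \<Longrightarrow> D \<subseteq> Y \<Longrightarrow> diamond_closed n D Y \<Longrightarrow> A \<subseteq> D) \<Longrightarrow>
     A \<subseteq> diamond_closure n Y X"
  unfolding diamond_closure_def by blast

lemma bottom_in_order_ideal:
  assumes "I \<noteq> {}" and ideal: "order_ideal_in n I (bruhat_interval n u v)"
  shows "u \<in> I"
proof -
  obtain w where w: "w \<in> I" using assms(1) by blast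
  then have "bruhat_le n u w" "bruhat_le n w v"
    using ideal by (auto simp: order_ideal_in_def bruhat_interval_def)
  then have "u \<in> bruhat_interval n u v" and "bruhat_le n u w"
    by (auto simp: bruhat_interval_def bruhat_le_def)
  then show ?thesis using w ideal by (auto simp: order_ideal_in_def)
qed

lemma order_ideal_subset_diamond_closed:
  assumes ideal: "order_ideal_in n I (bruhat_interval n u v)"
    and generators: "{u} \<union> (atoms n u v \<inter> I) \<subseteq> D"
    and closed: "diamond_closed n D (bruhat_interval n u v)"
  shows "I \<subseteq> D"
proof
  fix w assume "w \<in> I"
  then show "w \<in> D"
  proof (induction "len n w" arbitrary: w rule: less_induct)
    case less
    have w: "w \<in> bruhat_interval n u v"
      using less.prems ideal by (auto simp: order_ideal_in_def)
    show "w \<in> D"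
    proof (cases "w = u \<or> w \<in> atoms n u v")
      case True
      then show ?thesis using generators less.prems by blast
    next
      case False
      then obtain x y y' where dia: "diamond n x y y' w"
        and below: "bruhat_le n u x" "bruhat_le n u y" "bruhat_le n u y'"
        using non_atom_top_of_diamond[OF w] by blast
      have "{x, y, y'} \<subseteq> I"
        using below diamond_bruhat_le_top[OF dia] less.prems w ideal
        by (auto simp: order_ideal_in_def bruhat_interval_def intro: bruhat_le_trans)
      then have "{x, y, y'} \<subseteq> D"
        using less.hyps diamond_len_less_top[OF dia] by blast
      moreover have "{x, y, y', w} \<subseteq> bruhat_interval n u v"
        using \<open>{x, y, y'} \<subseteq> I\<close> less.prems ideal by (auto simp: order_ideal_in_def)
      ultimately show ?thesis
        using diamond_closedD[OF closed dia] by blast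
    qed
  qed
qed

theorem lemma4p2:
  fixes n :: nat and u v :: "nat \<Rightarrow> nat" and I :: "(nat \<Rightarrow> nat) set"
  assumes "bruhat_le n u v"
    and "I \<noteq> {}"
    and "order_ideal_in n I (bruhat_interval n u v)"
    and "diamond_closed n I (bruhat_interval n u v)"
  shows "I = diamond_closure n (bruhat_interval n u v) ({u} \<union> (atoms n u v \<inter> I))"
proof (rule antisym)
  show "I \<subseteq> diamond_closure n (bruhat_interval n u v) ({u} \<union> (atoms n u v \<inter> I))"
    using order_ideal_subset_diamond_closed[OF assms(3)] by (rule subset_diamond_closureI)
  have "u \<in> I" using assms(2,3) by (rule bottom_in_order_ideal)
  then show "diamond_closure n (bruhat_interval n u v) ({u} \<union> (atoms n u v \<inter> I)) \<subseteq> I"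
    using assms(3,4) by (intro diamond_closure_least) (auto simp: order_ideal_in_def)
qed

end
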